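(* Let $\psi\in C^2((0,\infty))$ be concave with $\psi''(1)\neq0\neq\psi'(1)$, let $d>0$, and let $G=(V,E)$ be a finite graph satisfying $CD\psi(d,0)$. Then $G$ satisfies $CD\!\left(\frac{-\psi''(1)}{\psi'(1)^2}\,d,\,0\right)$.
   Context: A finite graph $G=(V,E)$: finite set $V$, irreflexive symmetric relation $E$; $v\sim w$ iff $(v,w)\in E$. $C(V)$: real functions on $V$; $C^+(V)$: positive ones. Laplacian $\Delta f(v)=\sum_{w\sim v}(f(w)-f(v))$. $\Gamma(f,g):=\frac12(\Delta(fg)-f\Delta g-g\Delta f)$, $\Gamma(f)=\Gamma(f,f)$, $\Gamma_2(f):=\frac12(\Delta\Gamma(f)-2\Gamma(f,\Delta f))$. $G$ satisfies $CD(d,0)$ if $\Gamma_2(f)\ge\frac1d(\Delta f)^2$ for all $f\in C(V)$. For $f\in C^+(V)$: $(\Delta^\psi f)(v):=\Delta\big[\psi\big(\tfrac{f}{f(v)}\big)\big](v)$; $(\Omega^\psi f)(v):=\Delta\Big[\psi'\big(\tfrac{f}{f(v)}\big)\cdot\tfrac{f}{f(v)}\cdot\big(\tfrac{\Delta f}{f}-\tfrac{(\Delta f)(v)}{f(v)}\big)\Big](v)$; $2\Gamma_2^\psi(f):=\Omega^\psi f+\frac{\Delta f\,\Delta^\psi f}{f}-\frac{\Delta(f\,\Delta^\psi f)}{f}$. $G$ satisfies $CD\psi(d,0)$ if $\Gamma_2^\psi(f)\ge\frac1d(\Delta^\psi f)^2$ for all $f\in C^+(V)$. *)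

theory Defs
  imports "HOL-Analysis.Analysis"
begin

definition fin_graph :: "'a set \<Rightarrow> ('a \<Rightarrow> 'a \<Rightarrow> bool) \<Rightarrow> bool" where
  "fin_graph V E \<longleftrightarrow> finite V \<and> (\<forall>v w. E v w \<longrightarrow> v \<in> V \<and> w \<in> V)
     \<and> (\<forall>v w. E v w \<longrightarrow> E w v) \<and> (\<forall>v. \<not> E v v)"

definition lap :: "'a set \<Rightarrow> ('a \<Rightarrow> 'a \<Rightarrow> bool) \<Rightarrow> ('a \<Rightarrow> real) \<Rightarrow> 'a \<Rightarrow> real" where
  "lap V E f v = (\<Sum>w\<in>{w\<in>V. E v w}. f w - f v)"

definition Gam :: "'a set \<Rightarrow> ('a \<Rightarrow> 'a \<Rightarrow> bool) \<Rightarrow> ('a \<Rightarrow> real) \<Rightarrow> ('a \<Rightarrow> real) \<Rightarrow> 'a \<Rightarrow> real" where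
  "Gam V E f g v = (1/2) * (lap V E (\<lambda>x. f x * g x) v - f v * lap V E g v - g v * lap V E f v)"

definition Gam2 :: "'a set \<Rightarrow> ('a \<Rightarrow> 'a \<Rightarrow> bool) \<Rightarrow> ('a \<Rightarrow> real) \<Rightarrow> 'a \<Rightarrow> real" where
  "Gam2 V E f v = (1/2) * (lap V E (\<lambda>x. Gam V E f f x) v - 2 * Gam V E f (lap V E f) v)"

definition CD :: "'a set \<Rightarrow> ('a \<Rightarrow> 'a \<Rightarrow> bool) \<Rightarrow> real \<Rightarrow> bool" where
  "CD V E d \<longleftrightarrow> (\<forall>f. \<forall>v\<in>V. Gam2 V E f v \<ge> (1/d) * (lap V E f v)^2)"

definition lap_psi :: "(real \<Rightarrow> real) \<Rightarrow> 'a set \<Rightarrow> ('a \<Rightarrow> 'a \<Rightarrow> bool) \<Rightarrow> ('a \<Rightarrow> real) \<Rightarrow> 'a \<Rightarrow> real" where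
  "lap_psi \<psi> V E f v = lap V E (\<lambda>w. \<psi> (f w / f v)) v"

definition Omega_psi :: "(real \<Rightarrow> real) \<Rightarrow> 'a set \<Rightarrow> ('a \<Rightarrow> 'a \<Rightarrow> bool) \<Rightarrow> ('a \<Rightarrow> real) \<Rightarrow> 'a \<Rightarrow> real" where
  "Omega_psi \<psi> V E f v = lap V E (\<lambda>w. deriv \<psi> (f w / f v) * (f w / f v)
        * (lap V E f w / f w - lap V E f v / f v)) v"

text \<open>Gam2_psi is Gamma_2^psi, i.e. one half of the defining expression for 2 Gamma_2^psi.\<close>
definition Gam2_psi :: "(real \<Rightarrow> real) \<Rightarrow> 'a set \<Rightarrow> ('a \<Rightarrow> 'a \<Rightarrow> bool) \<Rightarrow> ('a \<Rightarrow> real) \<Rightarrow> 'a \<Rightarrow> real" where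
  "Gam2_psi \<psi> V E f v = (1/2) * (Omega_psi \<psi> V E f v
        + lap V E f v * lap_psi \<psi> V E f v / f v
        - lap V E (\<lambda>w. f w * lap_psi \<psi> V E f w) v / f v)"

definition CD_psi :: "(real \<Rightarrow> real) \<Rightarrow> 'a set \<Rightarrow> ('a \<Rightarrow> 'a \<Rightarrow> bool) \<Rightarrow> real \<Rightarrow> bool" where
  "CD_psi \<psi> V E d \<longleftrightarrow> (\<forall>f. (\<forall>v\<in>V. f v > 0) \<longrightarrow>
      (\<forall>v\<in>V. Gam2_psi \<psi> V E f v \<ge> (1/d) * (lap_psi \<psi> V E f v)^2))"

definition C2_pos :: "(real \<Rightarrow> real) \<Rightarrow> bool" where
  "C2_pos \<psi> \<longleftrightarrow> (\<forall>x>0. \<psi> differentiable at x \<and> deriv \<psi> differentiable at x)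
     \<and> continuous_on {0<..} (deriv (deriv \<psi>))"

end

theory Submission
  imports Defs
begin

text \<open>Test \<open>CD\<psi>(d,0)\<close> on the positive functions \<open>f = 1 + \<epsilon> g\<close>. Expanding \<open>\<psi>\<close> to second
  order at \<open>1\<close>, \<open>\<Delta>\<^sup>\<psi> f(v) = \<epsilon> \<psi>'(1) \<Delta>g(v) + O(\<epsilon>\<^sup>2)\<close> and
  \<open>\<Gamma>\<^sub>2\<^sup>\<psi>(f)(v) = - \<epsilon>\<^sup>2 \<psi>''(1) \<Gamma>\<^sub>2(g)(v) + o(\<epsilon>\<^sup>2)\<close>. Dividing the \<open>CD\<psi>\<close> inequality by \<open>\<epsilon>\<^sup>2\<close>
  and letting \<open>\<epsilon> \<rightarrow> 0\<close> gives \<open>\<psi>'(1)\<^sup>2 (\<Delta>g)\<^sup>2 / d \<le> -\<psi>''(1) \<Gamma>\<^sub>2(g)\<close>, and concavity makes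
  \<open>\<psi>''(1) < 0\<close>. The error terms are written with continuous Taylor quotients of \<open>\<psi>\<close> at \<open>1\<close>, so
  that the limit is just continuity in \<open>\<epsilon>\<close>.\<close>

definition taylor_quot :: "(real \<Rightarrow> real) \<Rightarrow> real \<Rightarrow> real" where
  "taylor_quot \<psi> h =
     (if h = 0 then deriv (deriv \<psi>) 1 / 2 else (\<psi> (1 + h) - \<psi> 1 - deriv \<psi> 1 * h) / h\<^sup>2)"

definition deriv_quot :: "(real \<Rightarrow> real) \<Rightarrow> real \<Rightarrow> real" where
  "deriv_quot \<psi> h = (if h = 0 then deriv (deriv \<psi>) 1 else (deriv \<psi> (1 + h) - deriv \<psi> 1) / h)"

lemma taylor_quot_expansion: "\<psi> (1 + h) = \<psi> 1 + deriv \<psi> 1 * h + taylor_quot \<psi> h * h\<^sup>2"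
  by (cases "h = 0") (auto simp: taylor_quot_def field_simps)

lemma deriv_quot_expansion: "deriv \<psi> (1 + h) = deriv \<psi> 1 + h * deriv_quot \<psi> h"
  by (cases "h = 0") (auto simp: deriv_quot_def field_simps)

lemma eventually_at_0_small: "eventually (\<lambda>h::real. h \<noteq> 0 \<and> \<bar>h\<bar> < 1) (at 0)"
  unfolding eventually_at by (rule exI[of _ 1]) auto

lemma deriv_difference_quotient_tendsto:
  fixes \<psi> :: "real \<Rightarrow> real"
  assumes "deriv \<psi> differentiable at 1"
  shows "((\<lambda>h. (deriv \<psi> (1 + h) - deriv \<psi> 1) / h) \<longlongrightarrow> deriv (deriv \<psi>) 1) (at 0)"
proof -
  have "DERIV (deriv \<psi>) 1 :> deriv (deriv \<psi>) 1"
    using assms DERIV_deriv_iff_real_differentiable by blast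
  then show ?thesis by (simp add: DERIV_def)
qed

lemma isCont_deriv_quot:
  fixes \<psi> :: "real \<Rightarrow> real"
  assumes "deriv \<psi> differentiable at 1"
  shows "isCont (deriv_quot \<psi>) 0"
proof -
  have "(deriv_quot \<psi> \<longlongrightarrow> deriv (deriv \<psi>) 1) (at 0)"
    using deriv_difference_quotient_tendsto[OF assms]
    by (rule Lim_transform_eventually)
       (use eventually_at_0_small in \<open>rule eventually_mono, auto simp: deriv_quot_def\<close>)
  thus ?thesis by (simp add: isCont_def deriv_quot_def)
qed

lemma isCont_taylor_quot:
  fixes \<psi> :: "real \<Rightarrow> real"
  assumes dif: "\<forall>x>0. \<psi> differentiable at x" and dif1: "deriv \<psi> differentiable at 1"
  shows "isCont (taylor_quot \<psi>) 0"
proof -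
  let ?p1 = "deriv \<psi> 1" and ?p2 = "deriv (deriv \<psi>) 1"
  have "isCont \<psi> (0 + 1)" using dif by (simp add: differentiable_imp_continuous_within)
  hence "isCont (\<lambda>h. \<psi> (h + 1)) 0" by (rule isCont_o2[rotated]) (intro continuous_intros)
  hence num_tendsto: "((\<lambda>h. \<psi> (1 + h) - \<psi> 1 - ?p1 * h) \<longlongrightarrow> 0) (at 0)"
    by (auto simp: isCont_def add.commute intro!: tendsto_eq_intros)
  have num_deriv: "\<forall>\<^sub>F h in at 0. DERIV (\<lambda>h. \<psi> (1 + h) - \<psi> 1 - ?p1 * h) h :> deriv \<psi> (1 + h) - ?p1"
    using eventually_at_0_small
  proof (rule eventually_mono)
    fix h :: real assume "h \<noteq> 0 \<and> \<bar>h\<bar> < 1"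
    hence "DERIV \<psi> (1 + h) :> deriv \<psi> (1 + h)"
      using dif DERIV_deriv_iff_real_differentiable by auto
    thus "DERIV (\<lambda>h. \<psi> (1 + h) - \<psi> 1 - ?p1 * h) h :> deriv \<psi> (1 + h) - ?p1"
      by (auto intro!: derivative_eq_intros DERIV_chain2[where f = \<psi>])
  qed
  have deriv_quot_tendsto: "((\<lambda>h. (deriv \<psi> (1 + h) - ?p1) / (2 * h)) \<longlongrightarrow> ?p2 / 2) (at 0)"
    using tendsto_divide[OF deriv_difference_quotient_tendsto[OF dif1] tendsto_const[of 2]]
    by (simp add: field_simps)
  have "((\<lambda>h. (\<psi> (1 + h) - \<psi> 1 - ?p1 * h) / h\<^sup>2) \<longlongrightarrow> ?p2 / 2) (at 0)"
    by (rule lhopital[OF num_tendsto _ _ _ num_deriv _ deriv_quot_tendsto];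
        (rule eventually_mono[OF eventually_at_0_small])?)
       (auto intro!: tendsto_eq_intros derivative_eq_intros)
  hence "(taylor_quot \<psi> \<longlongrightarrow> ?p2 / 2) (at 0)"
    by (rule Lim_transform_eventually)
       (use eventually_at_0_small in \<open>rule eventually_mono, auto simp: taylor_quot_def\<close>)
  thus ?thesis by (simp add: isCont_def taylor_quot_def)
qed

text \<open>Concavity makes the symmetric second difference quotient
  \<open>taylor_quot \<psi> h + taylor_quot \<psi> (-h)\<close> nonpositive; its limit is \<open>\<psi>''(1)\<close>.\<close>
lemma concave_second_deriv_nonpos:
  fixes \<psi> :: "real \<Rightarrow> real"
  assumes "concave_on {0<..} \<psi>"
    and "\<forall>x>0. \<psi> differentiable at x" and "deriv \<psi> differentiable at 1"
  shows "deriv (deriv \<psi>) 1 \<le> 0"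
proof -
  have cont: "isCont (taylor_quot \<psi>) 0"
    using assms(2,3) by (rule isCont_taylor_quot)
  hence "isCont (\<lambda>h. taylor_quot \<psi> (- h)) 0"
    using isCont_o2[where f = "\<lambda>h. - h" and a = 0 and g = "taylor_quot \<psi>"] by simp
  with cont have "((\<lambda>h. taylor_quot \<psi> h + taylor_quot \<psi> (- h)) \<longlongrightarrow> deriv (deriv \<psi>) 1) (at 0)"
    using tendsto_add[of "taylor_quot \<psi>" _ _ "\<lambda>h. taylor_quot \<psi> (- h)"]
    by (force simp: isCont_def taylor_quot_def)
  moreover have "\<forall>\<^sub>F h in at 0. taylor_quot \<psi> h + taylor_quot \<psi> (- h) \<le> 0"
    using eventually_at_0_small
  proof (rule eventually_mono)
    fix h :: real assume h: "h \<noteq> 0 \<and> \<bar>h\<bar> < 1"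
    have "(1/2) * \<psi> (1 - h) + (1/2) * \<psi> (1 + h) \<le> \<psi> ((1/2) *\<^sub>R (1 - h) + (1/2) *\<^sub>R (1 + h))"
    proof -
      have "1 - h \<in> {0<..}" "1 + h \<in> {0<..}" using h by auto
      with assms(1) show ?thesis unfolding concave_on_iff by (auto elim!: ballE allE[of _ "1/2"])
    qed
    moreover have "(1 - h) / 2 + (1 + h) / 2 = (1::real)" by (simp add: field_simps)
    ultimately have "\<psi> (1 + h) + \<psi> (1 + - h) - 2 * \<psi> 1 \<le> 0" by simp
    hence "(taylor_quot \<psi> h + taylor_quot \<psi> (- h)) * h\<^sup>2 \<le> 0"
      using taylor_quot_expansion[of \<psi> h] taylor_quot_expansion[of \<psi> "- h"]
      by (simp add: algebra_simps)
    with h show "taylor_quot \<psi> h + taylor_quot \<psi> (- h) \<le> 0"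
      by (simp add: mult_le_0_iff)
  qed
  ultimately show ?thesis
    by (rule tendsto_le[OF at_neq_bot tendsto_const])
qed

lemma lap_affine: "lap V E (\<lambda>x. c + e * g x) x = e * lap V E g x"
  unfolding lap_def by (simp add: sum_distrib_left algebra_simps)

lemma Gam_eq_sum: "Gam V E f h x = (1/2) * (\<Sum>w\<in>{w\<in>V. E x w}. (f w - f x) * (h w - h x))"
proof -
  have "lap V E (\<lambda>x. f x * h x) x - f x * lap V E h x - h x * lap V E f x
     = (\<Sum>w\<in>{w\<in>V. E x w}. (f w * h w - f x * h x) - f x * (h w - h x) - h x * (f w - f x))"
    unfolding lap_def by (simp only: sum_subtractf sum_distrib_left[symmetric])
  also have "\<dots> = (\<Sum>w\<in>{w\<in>V. E x w}. (f w - f x) * (h w - h x))"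
    by (rule sum.cong) (auto simp: algebra_simps)
  finally show ?thesis unfolding Gam_def by simp
qed

text \<open>\<open>Gam_perturbed \<psi> V E g \<epsilon> x\<close> is the second-order part of \<open>\<Delta>\<^sup>\<psi>(1 + \<epsilon> g)(x)\<close>, up to the
  factor \<open>\<epsilon>\<^sup>2 / (1 + \<epsilon> g(x))\<^sup>2\<close>; at \<open>\<epsilon> = 0\<close> it is \<open>\<psi>''(1) \<Gamma>(g)(x)\<close>.\<close>
definition Gam_perturbed ::
    "(real \<Rightarrow> real) \<Rightarrow> 'a set \<Rightarrow> ('a \<Rightarrow> 'a \<Rightarrow> bool) \<Rightarrow> ('a \<Rightarrow> real) \<Rightarrow> real \<Rightarrow> 'a \<Rightarrow> real" where
  "Gam_perturbed \<psi> V E g e x =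
     (\<Sum>w\<in>{w\<in>V. E x w}. taylor_quot \<psi> (e * (g w - g x) / (1 + e * g x)) * (g w - g x)\<^sup>2)"

lemma lap_psi_affine:
  assumes "1 + e * g x \<noteq> 0"
  shows "lap_psi \<psi> V E (\<lambda>x. 1 + e * g x) x
    = e * deriv \<psi> 1 / (1 + e * g x) * lap V E g x
      + e\<^sup>2 / (1 + e * g x)\<^sup>2 * Gam_perturbed \<psi> V E g e x"
proof -
  let ?fx = "1 + e * g x"
  have "lap_psi \<psi> V E (\<lambda>x. 1 + e * g x) x
     = (\<Sum>w\<in>{w\<in>V. E x w}. e * deriv \<psi> 1 / ?fx * (g w - g x)
          + e\<^sup>2 / ?fx\<^sup>2 * (taylor_quot \<psi> (e * (g w - g x) / ?fx) * (g w - g x)\<^sup>2))"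
    unfolding lap_psi_def lap_def
  proof (rule sum.cong[OF refl])
    fix w
    let ?h = "e * (g w - g x) / ?fx"
    have "(1 + e * g w) / ?fx = 1 + ?h" using assms by (simp add: field_simps)
    then show "\<psi> ((1 + e * g w) / ?fx) - \<psi> (?fx / ?fx) = e * deriv \<psi> 1 / ?fx * (g w - g x)
          + e\<^sup>2 / ?fx\<^sup>2 * (taylor_quot \<psi> ?h * (g w - g x)\<^sup>2)"
      using assms taylor_quot_expansion[of \<psi> ?h] by (simp add: field_simps power2_eq_square)
  qed
  also have "\<dots> = e * deriv \<psi> 1 / ?fx * lap V E g x + e\<^sup>2 / ?fx\<^sup>2 * Gam_perturbed \<psi> V E g e x"
    unfolding lap_def Gam_perturbed_def by (simp add: sum.distrib sum_distrib_left)
  finally show ?thesis .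
qed

text \<open>The contribution of the edge \<open>vw\<close> to \<open>2 \<Gamma>\<^sub>2\<^sup>\<psi>(1 + \<epsilon> g)(v) / \<epsilon>\<^sup>2\<close>.\<close>
definition Gam2_perturbed_term ::
    "(real \<Rightarrow> real) \<Rightarrow> 'a set \<Rightarrow> ('a \<Rightarrow> 'a \<Rightarrow> bool) \<Rightarrow> ('a \<Rightarrow> real) \<Rightarrow> 'a \<Rightarrow> real \<Rightarrow> 'a \<Rightarrow> real" where
  "Gam2_perturbed_term \<psi> V E g v e w =
       deriv_quot \<psi> (e * (g w - g v) / (1 + e * g v)) * (g w - g v) / (1 + e * g v)
         * ((1 + e * g w) / (1 + e * g v))
         * (lap V E g w / (1 + e * g w) - lap V E g v / (1 + e * g v))
     - Gam_perturbed \<psi> V E g e w / ((1 + e * g v) * (1 + e * g w))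
     + Gam_perturbed \<psi> V E g e v / (1 + e * g v)\<^sup>2
     + e * (g w - g v) * Gam_perturbed \<psi> V E g e v / (1 + e * g v)^3"

text \<open>The edge summand of \<open>2 \<Gamma>\<^sub>2\<^sup>\<psi>(f)(v)\<close> for \<open>f = 1 + \<epsilon> g\<close>, where \<open>fw, fv\<close> are the values of \<open>f\<close>,
  \<open>Dw, Dv\<close> those of \<open>\<Delta>g\<close>, \<open>Sw, Sv\<close> those of \<open>Gam_perturbed\<close> and \<open>X\<close> that of \<open>deriv_quot\<close>.\<close>
lemma Gam2_psi_summand_identity:
  fixes e fw fv p1 Dw Dv Sw Sv X :: real
  assumes "fw \<noteq> 0" and "fv \<noteq> 0"
  shows "(p1 + (fw - fv) / fv * X) * (fw / fv) * (e * Dw / fw - e * Dv / fv)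
        + (fw - fv) * (e * p1 / fv * Dv + e\<^sup>2 / fv\<^sup>2 * Sv) / fv
        - (fw * (e * p1 / fw * Dw + e\<^sup>2 / fw\<^sup>2 * Sw) - fv * (e * p1 / fv * Dv + e\<^sup>2 / fv\<^sup>2 * Sv)) / fv
    = e\<^sup>2 * (X * ((fw - fv) / e) / fv * (fw / fv) * (Dw / fw - Dv / fv)
       - Sw / (fv * fw) + Sv / fv\<^sup>2 + (fw - fv) * Sv / fv^3)"
  using assms by (cases "e = 0") (simp_all add: field_simps power2_eq_square power3_eq_cube)

lemma Gam2_psi_affine:
  assumes e: "e \<noteq> 0" and fv: "1 + e * g v \<noteq> 0"
    and fN: "\<And>w. w \<in> V \<Longrightarrow> E v w \<Longrightarrow> 1 + e * g w \<noteq> 0"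
  shows "Gam2_psi \<psi> V E (\<lambda>x. 1 + e * g x) v
           = (1/2) * e\<^sup>2 * (\<Sum>w\<in>{w\<in>V. E v w}. Gam2_perturbed_term \<psi> V E g v e w)"
proof -
  let ?f = "\<lambda>x. 1 + e * g x"
  let ?N = "{w\<in>V. E v w}"
  let ?L = "lap_psi \<psi> V E ?f"
  define H where
    "H w = deriv \<psi> (?f w / ?f v) * (?f w / ?f v) * (lap V E ?f w / ?f w - lap V E ?f v / ?f v)" for w
  have Omega: "Omega_psi \<psi> V E ?f v = (\<Sum>w\<in>?N. H w)"
    unfolding Omega_psi_def H_def[abs_def] lap_def by simp
  have lap_L: "lap V E ?f v * ?L v / ?f v = (\<Sum>w\<in>?N. (?f w - ?f v) * ?L v / ?f v)"
    unfolding lap_def[of V E ?f v] by (simp add: sum_distrib_right sum_divide_distrib)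
  have lap_fL: "lap V E (\<lambda>w. ?f w * ?L w) v / ?f v = (\<Sum>w\<in>?N. (?f w * ?L w - ?f v * ?L v) / ?f v)"
    unfolding lap_def[of V E "\<lambda>w. ?f w * ?L w" v] by (simp add: sum_divide_distrib)
  have "Gam2_psi \<psi> V E ?f v = (1/2) *
      (\<Sum>w\<in>?N. H w + (?f w - ?f v) * ?L v / ?f v - (?f w * ?L w - ?f v * ?L v) / ?f v)"
    unfolding Gam2_psi_def Omega lap_L lap_fL by (simp add: sum.distrib sum_subtractf)
  also have "(\<Sum>w\<in>?N. H w + (?f w - ?f v) * ?L v / ?f v - (?f w * ?L w - ?f v * ?L v) / ?f v)
      = (\<Sum>w\<in>?N. e\<^sup>2 * Gam2_perturbed_term \<psi> V E g v e w)"
  proof (rule sum.cong[OF refl])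
    fix w assume "w \<in> ?N"
    hence fw: "?f w \<noteq> 0" using fN by auto
    let ?h = "e * (g w - g v) / ?f v"
    have q: "?f w / ?f v = 1 + ?h" using fv by (simp add: field_simps)
    have h_eq: "?h = (?f w - ?f v) / ?f v" by (simp add: algebra_simps)
    have g_eq: "(?f w - ?f v) / e = g w - g v" using e by (simp add: field_simps)
    have H_eq: "H w = (deriv \<psi> 1 + (?f w - ?f v) / ?f v * deriv_quot \<psi> ?h) * (?f w / ?f v)
        * (e * lap V E g w / ?f w - e * lap V E g v / ?f v)"
      unfolding H_def lap_affine q deriv_quot_expansion h_eq[symmetric] by (simp add: h_eq)
    show "H w + (?f w - ?f v) * ?L v / ?f v - (?f w * ?L w - ?f v * ?L v) / ?f v
          = e\<^sup>2 * Gam2_perturbed_term \<psi> V E g v e w"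
      unfolding H_eq lap_psi_affine[where e = e and g = g and x = w, OF fw]
        lap_psi_affine[where e = e and g = g and x = v, OF fv]
        Gam2_psi_summand_identity[OF fw fv] Gam2_perturbed_term_def g_eq h_eq
      by (simp add: algebra_simps)
  qed
  finally show ?thesis by (simp add: sum_distrib_left)
qed

lemma isCont_comp_rational_at_0:
  assumes "isCont F 0"
  shows "isCont (\<lambda>e::real. F (e * c / (1 + e * k))) 0"
proof -
  have "isCont (\<lambda>e::real. e * c / (1 + e * k)) 0" by (intro continuous_intros) auto
  then show ?thesis using isCont_o2[where f = "\<lambda>e. e * c / (1 + e * k)" and g = F] assms by simp
qed

lemma isCont_Gam_perturbed:
  assumes "isCont (taylor_quot \<psi>) 0"
  shows "isCont (\<lambda>e. Gam_perturbed \<psi> V E g e x) 0"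
  unfolding Gam_perturbed_def by (intro continuous_intros isCont_comp_rational_at_0 assms)

lemma isCont_Gam2_perturbed_term:
  assumes "isCont (taylor_quot \<psi>) 0" "isCont (deriv_quot \<psi>) 0"
  shows "isCont (\<lambda>e. Gam2_perturbed_term \<psi> V E g v e w) 0"
  unfolding Gam2_perturbed_term_def
  by (intro continuous_intros isCont_comp_rational_at_0 assms isCont_Gam_perturbed) auto

lemma Gam_perturbed_at_0: "Gam_perturbed \<psi> V E g 0 x = deriv (deriv \<psi>) 1 * Gam V E g g x"
  unfolding Gam_perturbed_def Gam_eq_sum
  by (simp add: taylor_quot_def sum_distrib_left power2_eq_square)

lemma sum_Gam2_perturbed_term_at_0:
  "(\<Sum>w\<in>{w\<in>V. E v w}. Gam2_perturbed_term \<psi> V E g v 0 w)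
     = - 2 * deriv (deriv \<psi>) 1 * Gam2 V E g v"
proof -
  let ?p2 = "deriv (deriv \<psi>) 1" and ?N = "{w\<in>V. E v w}"
  have term_at_0: "Gam2_perturbed_term \<psi> V E g v 0 w = ?p2 * ((g w - g v) * (lap V E g w - lap V E g v))
      - ?p2 * (Gam V E g g w - Gam V E g g v)" for w
    unfolding Gam2_perturbed_term_def Gam_perturbed_at_0 by (simp add: deriv_quot_def algebra_simps)
  have "(\<Sum>w\<in>?N. Gam2_perturbed_term \<psi> V E g v 0 w)
     = ?p2 * (\<Sum>w\<in>?N. (g w - g v) * (lap V E g w - lap V E g v))
       - ?p2 * (\<Sum>w\<in>?N. Gam V E g g w - Gam V E g g v)"
    unfolding term_at_0 by (subst sum_subtractf) (simp only: sum_distrib_left)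
  then show ?thesis
    unfolding Gam2_def Gam_eq_sum[of V E g "lap V E g"] lap_def[of V E "\<lambda>x. Gam V E g g x"]
    by (simp add: algebra_simps)
qed

lemma eventually_affine_pos:
  assumes "finite V"
  shows "\<forall>\<^sub>F e in at (0::real). e \<noteq> 0 \<and> (\<forall>x\<in>V. 1 + e * g x > 0)"
proof -
  have "((\<lambda>e. 1 + e * g x) \<longlongrightarrow> 1) (at (0::real))" for x
    by (auto intro!: tendsto_eq_intros)
  then have "\<forall>\<^sub>F e in at (0::real). 1 + e * g x > 0" for x
    by (rule order_tendstoD(1)) simp
  then show ?thesis
    using assms eventually_at_0_small by (auto simp: eventually_ball_finite_distrib eventually_conj_iff)
qed

lemma CD_psi_affine_ineq:
  assumes "CD_psi \<psi> V E d" and "v \<in> V"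
    and e: "e \<noteq> 0" and pos: "\<forall>x\<in>V. 1 + e * g x > 0"
  shows "(1/d) * (deriv \<psi> 1 / (1 + e * g v) * lap V E g v
                  + e / (1 + e * g v)\<^sup>2 * Gam_perturbed \<psi> V E g e v)\<^sup>2
         \<le> (1/2) * (\<Sum>w\<in>{w\<in>V. E v w}. Gam2_perturbed_term \<psi> V E g v e w)"
proof -
  let ?f = "\<lambda>x. 1 + e * g x"
  let ?Q = "deriv \<psi> 1 / ?f v * lap V E g v + e / (?f v)\<^sup>2 * Gam_perturbed \<psi> V E g e v"
  let ?R = "(1/2) * (\<Sum>w\<in>{w\<in>V. E v w}. Gam2_perturbed_term \<psi> V E g v e w)"
  have fv: "?f v \<noteq> 0" using pos \<open>v \<in> V\<close> by force
  have fN: "\<And>w. w \<in> V \<Longrightarrow> E v w \<Longrightarrow> ?f w \<noteq> 0" using pos by force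
  have "lap_psi \<psi> V E ?f v = e * ?Q"
    unfolding lap_psi_affine[where e = e and g = g and x = v, OF fv]
    by (simp add: power2_eq_square algebra_simps)
  then have "e\<^sup>2 * ((1/d) * ?Q\<^sup>2) = (1/d) * (lap_psi \<psi> V E ?f v)\<^sup>2"
    by (simp add: power_mult_distrib)
  also have "\<dots> \<le> Gam2_psi \<psi> V E ?f v"
    using assms(1) pos \<open>v \<in> V\<close> unfolding CD_psi_def by auto
  also have "\<dots> = e\<^sup>2 * ?R"
    using Gam2_psi_affine[where g = g and v = v, OF e fv fN] by simp
  finally have "e\<^sup>2 * ((1/d) * ?Q\<^sup>2) \<le> e\<^sup>2 * ?R" .
  moreover have "e\<^sup>2 > 0" using e by simp
  ultimately show ?thesis by (rule mult_left_le_imp_le)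
qed

lemma CD_psi_imp_Gam2_lower_bound:
  fixes \<psi> :: "real \<Rightarrow> real"
  assumes "\<forall>x>0. \<psi> differentiable at x" and "deriv \<psi> differentiable at 1"
    and "finite V" and "CD_psi \<psi> V E d" and "v \<in> V"
  shows "(1/d) * (deriv \<psi> 1 * lap V E g v)\<^sup>2 \<le> - deriv (deriv \<psi>) 1 * Gam2 V E g v"
proof -
  have cont_taylor: "isCont (taylor_quot \<psi>) 0" using assms(1,2) by (rule isCont_taylor_quot)
  have cont_deriv: "isCont (deriv_quot \<psi>) 0" using assms(2) by (rule isCont_deriv_quot)
  define lhs where "lhs e = (1/d) * (deriv \<psi> 1 / (1 + e * g v) * lap V E g v
                                    + e / (1 + e * g v)\<^sup>2 * Gam_perturbed \<psi> V E g e v)\<^sup>2" for e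
  define rhs where "rhs e = (1/2) * (\<Sum>w\<in>{w\<in>V. E v w}. Gam2_perturbed_term \<psi> V E g v e w)" for e
  have lhs_cont: "isCont lhs 0" unfolding lhs_def[abs_def]
    by (intro continuous_intros isCont_Gam_perturbed cont_taylor) auto
  have rhs_cont: "isCont rhs 0" unfolding rhs_def[abs_def]
    by (intro continuous_intros isCont_Gam2_perturbed_term cont_taylor cont_deriv)
  have "\<forall>\<^sub>F e in at 0. lhs e \<le> rhs e"
    using eventually_affine_pos[OF \<open>finite V\<close>]
  proof (rule eventually_mono)
    fix e assume "e \<noteq> 0 \<and> (\<forall>x\<in>V. 1 + e * g x > 0)"
    then show "lhs e \<le> rhs e"
      unfolding lhs_def rhs_def by (intro CD_psi_affine_ineq[OF assms(4,5)]) auto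
  qed
  then have "lhs 0 \<le> rhs 0"
    using lhs_cont rhs_cont unfolding isCont_def by (intro tendsto_le[OF at_neq_bot])
  then show ?thesis
    unfolding lhs_def rhs_def sum_Gam2_perturbed_term_at_0 by simp
qed

theorem mainTheorem6:
  fixes \<psi> :: "real \<Rightarrow> real" and d :: real
    and V :: "'a set" and E :: "'a \<Rightarrow> 'a \<Rightarrow> bool"
  assumes "C2_pos \<psi>"
    and "concave_on {0<..} \<psi>"
    and "deriv (deriv \<psi>) 1 \<noteq> 0" and "deriv \<psi> 1 \<noteq> 0"
    and "d > 0"
    and "fin_graph V E"
    and "CD_psi \<psi> V E d"
  shows "CD V E ((- deriv (deriv \<psi>) 1 / (deriv \<psi> 1)^2) * d)"
  unfolding CD_def
proof (intro allI ballI)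
  let ?p1 = "deriv \<psi> 1" and ?p2 = "deriv (deriv \<psi>) 1"
  fix g :: "'a \<Rightarrow> real" and v assume "v \<in> V"
  have "finite V" using assms(6) unfolding fin_graph_def by simp
  have dif: "\<forall>x>0. \<psi> differentiable at x" and dif1: "deriv \<psi> differentiable at 1"
    using assms(1) unfolding C2_pos_def by auto
  have p2_neg: "?p2 < 0"
    using concave_second_deriv_nonpos[OF assms(2) dif dif1] assms(3) by linarith
  have "(1 / (- ?p2 / ?p1\<^sup>2 * d)) * (lap V E g v)\<^sup>2 = ((1/d) * (?p1 * lap V E g v)\<^sup>2) / (- ?p2)"
    using assms(4,5) p2_neg by (simp add: field_simps power_mult_distrib)
  also have "\<dots> \<le> (- ?p2 * Gam2 V E g v) / (- ?p2)"
    using CD_psi_imp_Gam2_lower_bound[OF dif dif1 \<open>finite V\<close> assms(7) \<open>v \<in> V\<close>] p2_neg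
    by (intro divide_right_mono) auto
  also have "\<dots> = Gam2 V E g v" using p2_neg by simp
  finally show "Gam2 V E g v \<ge> (1 / (- ?p2 / ?p1\<^sup>2 * d)) * (lap V E g v)\<^sup>2" .
qed

end
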